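(* Let $n\ge1$ be a natural number, let $a,b,\alpha,\beta$ be variables (with $\beta a-\alpha b\neq0$), and write $\Psi_r(n)=\Psi\left(\begin{array}{cc|c} a & b & n \\ \alpha & \beta & r \end{array}\right)$, $\Phi_r(n)=\Phi\left(\begin{array}{cc|c} a & b & n \\ \alpha & \beta & r \end{array}\right)$. Let $E=a\frac{\partial}{\partial \alpha}+b\frac{\partial}{\partial \beta}$ (so $a,b$ are held constant). Then \[ \Psi_r(n)=-\frac{1}{\lfloor n/2\rfloor-r}\,E\,\Psi_{r+1}(n)\quad\text{for }0\le r\le\lfloor n/2\rfloor-1, \] \[ \Phi_r(n)=-\frac{1}{\lfloor (n-1)/2\rfloor-r}\,E\,\Phi_{r+1}(n)\quad\text{for }0\le r\le\lfloor (n-1)/2\rfloor-1. \]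
   Context: $\delta(m)=1$ for $m$ odd, $0$ for $m$ even; $\lfloor\cdot\rfloor$ is the floor. For indeterminates $a,b,\alpha,\beta$ and $n\ge1$, $\Psi\left(\begin{array}{cc|c} a & b & n \\ \alpha & \beta & r \end{array}\right)$ ($0\le r\le\lfloor n/2\rfloor$) and $\Phi\left(\begin{array}{cc|c} a & b & n \\ \alpha & \beta & r \end{array}\right)$ ($0\le r\le\lfloor (n-1)/2\rfloor$) are the unique polynomials in $\mathbb{Z}[a,b,\alpha,\beta]$ such that, identically in $x,y$, $(\beta a-\alpha b)^{\lfloor n/2\rfloor}\frac{x^n+y^n}{(x+y)^{\delta(n)}}=\sum_{r}\Psi\left(\begin{array}{cc|c} a & b & n \\ \alpha & \beta & r \end{array}\right)(\alpha x^2+\beta xy+\alpha y^2)^{\lfloor n/2\rfloor-r}(ax^2+bxy+ay^2)^r$ and $(\beta a-\alpha b)^{\lfloor (n-1)/2\rfloor}\frac{x^n-y^n}{(x-y)(x+y)^{\delta(n-1)}}=\sum_{r}\Phi\left(\begin{array}{cc|c} a & b & n \\ \alpha & \beta & r \end{array}\right)(\alpha x^2+\beta xy+\alpha y^2)^{\lfloor (n-1)/2\rfloor-r}(ax^2+bxy+ay^2)^r$. *)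

theory Defs
  imports "HOL-Computational_Algebra.Polynomial"
begin

text \<open>The ring Z[a,b,alpha,beta] is represented by nested univariate polynomials:
  innermost variable a, then b, then alpha, outermost beta.\<close>

type_synonym mpoly4 = "int poly poly poly poly"

definition var_beta :: mpoly4 where "var_beta = [:0, 1:]"
definition var_alpha :: mpoly4 where "var_alpha = [:[:0, 1:]:]"
definition var_b :: mpoly4 where "var_b = [:[:[:0, 1:]:]:]"
definition var_a :: mpoly4 where "var_a = [:[:[:[:0, 1:]:]:]:]"

definition d_beta :: "mpoly4 \<Rightarrow> mpoly4" where "d_beta f = pderiv f"
definition d_alpha :: "mpoly4 \<Rightarrow> mpoly4" where "d_alpha f = map_poly pderiv f"

definition Eop :: "mpoly4 \<Rightarrow> mpoly4" where
  "Eop f = var_a * d_alpha f + var_b * d_beta f"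

text \<open>Polynomials in the indeterminates x (outer) and y (inner) over Z[a,b,alpha,beta].\<close>
type_synonym xypoly = "mpoly4 poly poly"

definition cxy :: "mpoly4 \<Rightarrow> xypoly" where "cxy c = [:[:c:]:]"
definition var_x :: xypoly where "var_x = [:0, 1:]"
definition var_y :: xypoly where "var_y = [:[:0, 1:]:]"

definition quad :: "mpoly4 \<Rightarrow> mpoly4 \<Rightarrow> xypoly" where
  "quad p q = cxy p * var_x ^ 2 + cxy q * var_x * var_y + cxy p * var_y ^ 2"

definition delta :: "nat \<Rightarrow> nat" where "delta m = (if odd m then 1 else 0)"

text \<open>Psi n r, for 0 <= r <= floor(n/2) (and 0 beyond), defined as the unique family of
  coefficients in the expansion; the division by (x+y)^delta(n) is cleared.\<close>
definition Psi :: "nat \<Rightarrow> nat \<Rightarrow> mpoly4" where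
  "Psi n = (THE f. (\<forall>r. n div 2 < r \<longrightarrow> f r = 0) \<and>
     cxy ((var_beta * var_a - var_alpha * var_b) ^ (n div 2)) * (var_x ^ n + var_y ^ n)
     = (var_x + var_y) ^ delta n *
       (\<Sum>r\<le>n div 2. cxy (f r) * quad var_alpha var_beta ^ (n div 2 - r) * quad var_a var_b ^ r))"

definition Phi :: "nat \<Rightarrow> nat \<Rightarrow> mpoly4" where
  "Phi n = (THE f. (\<forall>r. (n - 1) div 2 < r \<longrightarrow> f r = 0) \<and>
     cxy ((var_beta * var_a - var_alpha * var_b) ^ ((n - 1) div 2)) * (var_x ^ n - var_y ^ n)
     = (var_x - var_y) * (var_x + var_y) ^ delta (n - 1) *
       (\<Sum>r\<le>(n - 1) div 2. cxy (f r) * quad var_alpha var_beta ^ ((n - 1) div 2 - r) * quad var_a var_b ^ r))"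

end

theory Submission
  imports Defs
begin

text \<open>Put \<open>u = x\<^sup>2 + y\<^sup>2\<close> and \<open>v = x y\<close>, so that \<open>quad p q = p u + q v\<close>, and let
  \<open>D = \<beta> a - \<alpha> b\<close>. By Cramer's rule \<open>D u\<close> and \<open>D v\<close> are linear combinations of
  \<open>Q = quad \<alpha> \<beta>\<close> and \<open>P = quad a b\<close>, so the recurrence \<open>T\<^sub>k\<^sub>+\<^sub>2 = u T\<^sub>k\<^sub>+\<^sub>1 - v\<^sup>2 T\<^sub>k\<close> of the
  power sums shows that \<open>D\<^sup>m (x\<^sup>n \<plusminus> y\<^sup>n)\<close> is the cleared denominator times a binary form of
  degree \<open>m\<close> in \<open>Q\<close> and \<open>P\<close>. Its coefficients are unique, because the Jacobian bracket
  \<open>{P, -}\<close> is a derivation that kills \<open>P\<close> and the constants but not \<open>Q\<close>.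

  Extended coefficientwise, \<open>E\<close> is a derivation killing \<open>x\<close>, \<open>y\<close>, \<open>D\<close> and \<open>P\<close> and sending
  \<open>Q\<close> to \<open>P\<close>. Applied to the expansion \<open>D\<^sup>m W = pre \<Sum> f\<^sub>r Q\<^sup>m\<^sup>-\<^sup>r P\<^sup>r\<close> it gives
  \<open>0 = \<Sum> (E f\<^sub>r + (m - r + 1) f\<^sub>r\<^sub>-\<^sub>1) Q\<^sup>m\<^sup>-\<^sup>r P\<^sup>r\<close>, and uniqueness yields the recurrence.\<close>

section \<open>Derivations\<close>

locale derivation =
  fixes d :: "'a::comm_ring_1 \<Rightarrow> 'a"
  assumes add: "d (x + y) = d x + d y"
    and mult: "d (x * y) = d x * y + x * d y"
begin

lemma zero: "d 0 = 0"
  using add[of 0 0] by simp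

lemma one: "d 1 = 0"
  using mult[of 1 1] by simp

lemma diff: "d (x - y) = d x - d y"
  using add[of "x - y" y] by simp

lemma sum: "d (sum f A) = (\<Sum>i\<in>A. d (f i))"
  by (induction A rule: infinite_finite_induct) (simp_all add: zero add)

lemma of_nat: "d (of_nat n) = 0"
  by (induction n) (simp_all add: zero one add)

lemma power: "d (x ^ n) = of_nat n * x ^ (n - 1) * d x"
proof (induction n)
  case (Suc n)
  then show ?case
    by (cases n) (simp_all add: mult algebra_simps)
qed (simp add: one)

end

lemma derivation_lincomb:
  assumes "derivation d\<^sub>1" "derivation d\<^sub>2"
  shows "derivation (\<lambda>h. A * d\<^sub>1 h + B * d\<^sub>2 h)"
  using assms by unfold_locales (simp_all add: derivation.add derivation.mult algebra_simps)

lemma derivation_pderiv: "derivation (pderiv :: 'a::idom poly \<Rightarrow> 'a poly)"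
  by unfold_locales (simp_all add: pderiv_add pderiv_mult algebra_simps)

lemma derivation_map_poly:
  assumes "derivation d"
  shows "derivation (map_poly d)"
proof
  interpret derivation d by fact
  fix x y :: "'a poly"
  show "map_poly d (x + y) = map_poly d x + map_poly d y"
    by (intro poly_eqI) (simp add: coeff_map_poly zero add)
  show "map_poly d (x * y) = map_poly d x * y + x * map_poly d y"
    by (intro poly_eqI) (simp add: coeff_map_poly zero coeff_mult sum mult sum.distrib)
qed

section \<open>Binary forms\<close>

definition binary_form :: "'a::comm_semiring_1 \<Rightarrow> 'a \<Rightarrow> nat \<Rightarrow> (nat \<Rightarrow> 'a) \<Rightarrow> 'a" where
  "binary_form Q P m c = (\<Sum>r\<le>m. c r * Q ^ (m - r) * P ^ r)"

lemma binary_form_0 [simp]: "binary_form Q P 0 c = c 0"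
  by (simp add: binary_form_def)

lemma binary_form_zero [simp]: "binary_form Q P m (\<lambda>_. 0) = 0"
  by (simp add: binary_form_def)

lemma binary_form_cong:
  "(\<And>r. r \<le> m \<Longrightarrow> c r = c' r) \<Longrightarrow> binary_form Q P m c = binary_form Q P m c'"
  unfolding binary_form_def by (rule sum.cong) simp_all

lemma binary_form_add:
  "binary_form Q P m c + binary_form Q P m c' = binary_form Q P m (\<lambda>r. c r + c' r)"
  by (simp add: binary_form_def sum.distrib algebra_simps)

lemma binary_form_diff:
  "binary_form Q P m c - binary_form Q P m c' = binary_form Q P m (\<lambda>r. c r - c' r)"
  for Q :: "'a::comm_ring_1"
  by (simp add: binary_form_def sum_subtractf algebra_simps)

lemma mult_binary_form:
  "x * binary_form Q P m c = binary_form Q P m (\<lambda>r. x * c r)"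
  by (simp add: binary_form_def sum_distrib_left mult.assoc)

lemma Q_mult_binary_form:
  "Q * binary_form Q P m c = binary_form Q P (Suc m) (\<lambda>r. if r \<le> m then c r else 0)"
proof -
  have "Q * binary_form Q P m c = (\<Sum>r\<le>m. c r * Q ^ (Suc m - r) * P ^ r)"
    unfolding binary_form_def sum_distrib_left
    by (rule sum.cong) (simp_all add: Suc_diff_le algebra_simps)
  also have "\<dots> = binary_form Q P (Suc m) (\<lambda>r. if r \<le> m then c r else 0)"
    by (auto simp: binary_form_def atMost_Suc intro: sum.cong)
  finally show ?thesis .
qed

lemma P_mult_binary_form:
  "P * binary_form Q P m c = binary_form Q P (Suc m) (\<lambda>r. case r of 0 \<Rightarrow> 0 | Suc i \<Rightarrow> c i)"
  unfolding binary_form_def sum.atMost_Suc_shift by (simp add: sum_distrib_left algebra_simps)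

lemma (in derivation) binary_form:
  assumes "d P = 0"
  shows "d (binary_form Q P m c) =
    binary_form Q P m (\<lambda>r. d (c r)) + d Q * binary_form Q P (m - 1) (\<lambda>r. of_nat (m - r) * c r)"
proof -
  have "d (c r * Q ^ (m - r) * P ^ r) =
      d (c r) * Q ^ (m - r) * P ^ r + d Q * (of_nat (m - r) * c r * Q ^ (m - r - 1) * P ^ r)" for r
    by (simp add: mult power assms algebra_simps)
  then have "d (binary_form Q P m c) = binary_form Q P m (\<lambda>r. d (c r)) +
      d Q * (\<Sum>r\<le>m. of_nat (m - r) * c r * Q ^ (m - r - 1) * P ^ r)"
    by (simp only: binary_form_def sum sum.distrib sum_distrib_left)
  also have "(\<Sum>r\<le>m. of_nat (m - r) * c r * Q ^ (m - r - 1) * P ^ r) =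
      binary_form Q P (m - 1) (\<lambda>r. of_nat (m - r) * c r)"
    by (cases m) (auto simp: binary_form_def atMost_Suc Suc_diff_le intro: sum.cong)
  finally show ?thesis .
qed

lemma binary_form_eq_0_imp_coeff_eq_0:
  fixes d :: "'a::{idom,ring_char_0} \<Rightarrow> 'a"
  assumes d: "derivation d" and "d P = 0" "d Q \<noteq> 0" "P \<noteq> 0"
    and "\<And>r. d (c r) = 0" "binary_form Q P k c = 0" "r \<le> k"
  shows "c r = 0"
  using assms(5-)
proof (induction k arbitrary: c r)
  case (Suc k)
  interpret derivation d by (fact d)
  have "d Q * binary_form Q P k (\<lambda>r. of_nat (Suc k - r) * c r) = 0"
    using binary_form[OF \<open>d P = 0\<close>, of Q "Suc k" c] Suc.prems(1,2) by (simp add: zero)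
  then have scaled_form: "binary_form Q P k (\<lambda>r. of_nat (Suc k - r) * c r) = 0"
    using \<open>d Q \<noteq> 0\<close> by simp
  have scaled_const: "d (of_nat (Suc k - r) * c r) = 0" for r
    by (simp add: mult of_nat Suc.prems(1))
  have lower: "c r = 0" if "r \<le> k" for r
  proof -
    have "(of_nat (Suc k - r) :: 'a) \<noteq> 0"
      using that by (metis Suc_diff_le of_nat_neq_0)
    moreover have "of_nat (Suc k - r) * c r = 0"
      using Suc.IH[of "\<lambda>r. of_nat (Suc k - r) * c r", OF scaled_const scaled_form that] .
    ultimately show ?thesis
      by (metis mult_eq_0_iff)
  qed
  then have "binary_form Q P (Suc k) c = c (Suc k) * P ^ Suc k"
    by (simp add: binary_form_def atMost_Suc)
  then have "c (Suc k) = 0"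
    using Suc.prems(2) \<open>P \<noteq> 0\<close> by simp
  with lower show ?case
    using Suc.prems(3) le_Suc_eq by blast
qed simp

section \<open>The quadratic forms Q and P\<close>

lemma cxy_add: "cxy (p + q) = cxy p + cxy q"
  by (simp add: cxy_def)

lemma cxy_diff: "cxy (p - q) = cxy p - cxy q"
  by (simp add: cxy_def)

lemma cxy_minus: "cxy (- p) = - cxy p"
  by (simp add: cxy_def)

lemma cxy_mult: "cxy (p * q) = cxy p * cxy q"
  by (simp add: cxy_def)

lemma cxy_0 [simp]: "cxy 0 = 0"
  by (simp add: cxy_def)

lemma cxy_1 [simp]: "cxy 1 = 1"
  by (simp add: cxy_def one_pCons)

lemma cxy_of_nat: "cxy (of_nat k) = of_nat k"
  by (simp add: cxy_def of_nat_poly)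

lemma cxy_power: "cxy (p ^ k) = cxy p ^ k"
  by (induction k) (simp_all add: cxy_mult)

lemma cxy_eq_0_iff [simp]: "cxy p = 0 \<longleftrightarrow> p = 0"
  by (simp add: cxy_def)

lemmas cxy_hom = cxy_add cxy_minus cxy_diff cxy_mult cxy_of_nat cxy_power

definition quad_Q :: xypoly where "quad_Q = quad var_alpha var_beta"
definition quad_P :: xypoly where "quad_P = quad var_a var_b"
definition det_PQ :: mpoly4 where "det_PQ = var_beta * var_a - var_alpha * var_b"

lemma det_PQ_mult_quad:
  "cxy det_PQ * quad p q =
    cxy (q * var_a - p * var_b) * quad_Q + cxy (p * var_beta - q * var_alpha) * quad_P"
  unfolding det_PQ_def quad_Q_def quad_P_def quad_def by (simp add: cxy_hom algebra_simps)

lemma det_PQ_nonzero: "det_PQ \<noteq> 0"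
proof
  assume "det_PQ = 0"
  then have "coeff det_PQ 1 = 0" by simp
  then show False by (simp add: det_PQ_def var_beta_def var_a_def var_alpha_def var_b_def)
qed

lemma quad_P_nonzero: "quad_P \<noteq> 0"
  by (simp add: quad_P_def quad_def cxy_def var_x_def var_y_def var_a_def power2_eq_square)

lemma var_x_plus_var_y_nonzero: "var_x + var_y \<noteq> 0"
  by (auto simp: var_x_def var_y_def dest: arg_cong[of _ _ "\<lambda>p. coeff p 1"])

lemma var_x_minus_var_y_nonzero: "var_x - var_y \<noteq> 0"
  by (auto simp: var_x_def var_y_def dest: arg_cong[of _ _ "\<lambda>p. coeff p 1"])

lemma y2_minus_x2_nonzero: "var_y ^ 2 - var_x ^ 2 \<noteq> 0"
  by (simp add: var_x_def var_y_def power2_eq_square)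

interpretation Eop: derivation Eop
  unfolding Eop_def[abs_def] d_alpha_def[abs_def] d_beta_def[abs_def]
  by (intro derivation_lincomb derivation_map_poly derivation_pderiv)

lemma Eop_vars [simp]:
  "Eop var_alpha = var_a" "Eop var_beta = var_b" "Eop var_a = 0" "Eop var_b = 0"
  by (simp_all add: Eop_def d_alpha_def d_beta_def var_alpha_def var_beta_def var_a_def var_b_def
      map_poly_pCons map_poly_1 pderiv_pCons one_pCons[symmetric])

lemma Eop_det_PQ: "Eop det_PQ = 0"
  by (simp add: det_PQ_def Eop.diff Eop.mult)

definition Eop_xy :: "xypoly \<Rightarrow> xypoly" where
  "Eop_xy = map_poly (map_poly Eop)"

interpretation Eop_xy: derivation Eop_xy
  unfolding Eop_xy_def by (intro derivation_map_poly Eop.derivation_axioms)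

lemma Eop_xy_cxy [simp]: "Eop_xy (cxy c) = cxy (Eop c)"
  by (simp add: Eop_xy_def cxy_def map_poly_pCons Eop.zero)

lemma Eop_xy_vars [simp]: "Eop_xy var_x = 0" "Eop_xy var_y = 0"
  by (simp_all add: Eop_xy_def var_x_def var_y_def map_poly_pCons map_poly_1 Eop.zero Eop.one
      one_pCons[symmetric])

lemma Eop_xy_quad: "Eop_xy (quad p q) = quad (Eop p) (Eop q)"
  by (simp add: quad_def Eop_xy.add Eop_xy.mult Eop_xy.power)

lemma Eop_xy_quad_Q: "Eop_xy quad_Q = quad_P"
  by (simp add: quad_Q_def quad_P_def Eop_xy_quad)

lemma Eop_xy_quad_P: "Eop_xy quad_P = 0"
  unfolding quad_P_def Eop_xy_quad by (simp add: quad_def)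

definition d_x :: "xypoly \<Rightarrow> xypoly" where "d_x = pderiv"
definition d_y :: "xypoly \<Rightarrow> xypoly" where "d_y = map_poly pderiv"

interpretation d_x: derivation d_x
  unfolding d_x_def by (rule derivation_pderiv)

interpretation d_y: derivation d_y
  unfolding d_y_def by (intro derivation_map_poly derivation_pderiv)

lemma d_x_simps [simp]: "d_x (cxy c) = 0" "d_x var_x = 1" "d_x var_y = 0"
  by (simp_all add: d_x_def cxy_def var_x_def var_y_def pderiv_pCons one_pCons)

lemma d_y_simps [simp]: "d_y (cxy c) = 0" "d_y var_x = 0" "d_y var_y = 1"
  by (simp_all add: d_y_def cxy_def var_x_def var_y_def pderiv_pCons map_poly_pCons map_poly_1
      one_pCons)

lemma d_x_quad: "d_x (quad p q) = 2 * cxy p * var_x + cxy q * var_y"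
  by (simp add: quad_def d_x.add d_x.mult d_x.power)

lemma d_y_quad: "d_y (quad p q) = cxy q * var_x + 2 * cxy p * var_y"
  by (simp add: quad_def d_y.add d_y.mult d_y.power)

definition bracket_P :: "xypoly \<Rightarrow> xypoly" where
  "bracket_P h = d_y quad_P * d_x h - d_x quad_P * d_y h"

lemma derivation_bracket_P: "derivation bracket_P"
  by unfold_locales (simp_all add: bracket_P_def d_x.add d_y.add d_x.mult d_y.mult algebra_simps)

lemma bracket_P_cxy: "bracket_P (cxy c) = 0"
  by (simp add: bracket_P_def)

lemma bracket_P_quad_P: "bracket_P quad_P = 0"
  by (simp add: bracket_P_def)

lemma bracket_P_quad_Q: "bracket_P quad_Q = 2 * cxy det_PQ * (var_y ^ 2 - var_x ^ 2)"
  unfolding bracket_P_def quad_Q_def quad_P_def d_x_quad d_y_quad det_PQ_def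
  by (simp add: cxy_hom algebra_simps power2_eq_square)

lemma bracket_P_quad_Q_nonzero: "bracket_P quad_Q \<noteq> 0"
  using det_PQ_nonzero y2_minus_x2_nonzero by (simp add: bracket_P_quad_Q)

lemma binary_form_QP_eq_0_imp_coeff_eq_0:
  assumes "binary_form quad_Q quad_P m (\<lambda>r. cxy (c r)) = 0" "r \<le> m"
  shows "c r = 0"
  using binary_form_eq_0_imp_coeff_eq_0[OF derivation_bracket_P bracket_P_quad_P
      bracket_P_quad_Q_nonzero quad_P_nonzero bracket_P_cxy assms]
  by simp

section \<open>Expansions of the power sums in Q and P\<close>

definition QP_form :: "nat \<Rightarrow> xypoly \<Rightarrow> bool" where
  "QP_form m H \<longleftrightarrow> (\<exists>c. H = binary_form quad_Q quad_P m (\<lambda>r. cxy (c r)))"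

lemma QP_form_const: "QP_form 0 (cxy c)"
  unfolding QP_form_def by (rule exI[of _ "\<lambda>_. c"]) simp

lemma QP_form_diff: "QP_form m H \<Longrightarrow> QP_form m G \<Longrightarrow> QP_form m (H - G)"
  unfolding QP_form_def by (auto simp: binary_form_diff cxy_diff[symmetric])

lemma QP_form_mult_linear:
  assumes "QP_form m H"
  shows "QP_form (Suc m) ((cxy p * quad_Q + cxy q * quad_P) * H)"
proof -
  obtain c where H: "H = binary_form quad_Q quad_P m (\<lambda>r. cxy (c r))"
    using assms QP_form_def by blast
  define c' where
    "c' r = p * (if r \<le> m then c r else 0) + q * (case r of 0 \<Rightarrow> 0 | Suc i \<Rightarrow> c i)" for r
  have "(cxy p * quad_Q + cxy q * quad_P) * H = cxy p * (quad_Q * H) + cxy q * (quad_P * H)"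
    by (simp add: algebra_simps)
  also have "\<dots> = binary_form quad_Q quad_P (Suc m) (\<lambda>r.
      cxy p * (if r \<le> m then cxy (c r) else 0) + cxy q * (case r of 0 \<Rightarrow> 0 | Suc i \<Rightarrow> cxy (c i)))"
    unfolding H Q_mult_binary_form P_mult_binary_form mult_binary_form binary_form_add ..
  also have "\<dots> = binary_form quad_Q quad_P (Suc m) (\<lambda>r. cxy (c' r))"
    by (rule binary_form_cong) (simp add: c'_def cxy_hom split: nat.split)
  finally show ?thesis
    unfolding QP_form_def by blast
qed

lemma QP_form_mult_det_quad:
  "QP_form m H \<Longrightarrow> QP_form (Suc m) (cxy det_PQ * quad p q * H)"
  unfolding det_PQ_mult_quad by (rule QP_form_mult_linear)

lemma power_sum_recurrence:
  "x ^ (j + 4) + s * y ^ (j + 4) =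
    (x\<^sup>2 + y\<^sup>2) * (x ^ (j + 2) + s * y ^ (j + 2)) - (x * y)\<^sup>2 * (x ^ j + s * y ^ j)"
  for x y s :: "'a::comm_ring_1"
  by (simp add: power_add algebra_simps power2_eq_square numeral_eq_Suc)

lemma power_sum_expansion:
  assumes init: "pre * cxy c = var_x ^ j + s * var_y ^ j"
    and step: "pre * quad 1 e = var_x ^ (j + 2) + s * var_y ^ (j + 2)"
  shows "\<exists>H. QP_form k H \<and>
    cxy (det_PQ ^ k) * (var_x ^ (j + 2 * k) + s * var_y ^ (j + 2 * k)) = pre * H"
proof (induction k rule: induct_nat_012)
  case 0
  show ?case
    using init by (intro exI[of _ "cxy c"]) (simp add: QP_form_const)
next
  case 1
  have "QP_form 1 (cxy det_PQ * quad 1 e)"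
    using QP_form_mult_det_quad[OF QP_form_const[of 1]] by simp
  moreover have "cxy (det_PQ ^ 1) * (var_x ^ (j + 2 * 1) + s * var_y ^ (j + 2 * 1)) =
      pre * (cxy det_PQ * quad 1 e)"
    by (simp only: mult_1_right power_one_right step[symmetric] mult.left_commute)
  ultimately show ?case
    unfolding One_nat_def by blast
next
  case (ge2 k)
  define T where "T i = var_x ^ (j + 2 * i) + s * var_y ^ (j + 2 * i)" for i
  define D where "D = cxy det_PQ"
  obtain H\<^sub>0 H\<^sub>1 where H\<^sub>0: "QP_form k H\<^sub>0" "cxy (det_PQ ^ k) * T k = pre * H\<^sub>0"
    and H\<^sub>1: "QP_form (Suc k) H\<^sub>1" "cxy (det_PQ ^ Suc k) * T (Suc k) = pre * H\<^sub>1"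
    using ge2.IH unfolding T_def by blast
  have "j + 2 * Suc (Suc k) = j + 2 * k + 4" "j + 2 * Suc k = j + 2 * k + 2"
    by simp_all
  then have T_rec: "T (Suc (Suc k)) = (var_x\<^sup>2 + var_y\<^sup>2) * T (Suc k) - (var_x * var_y)\<^sup>2 * T k"
    unfolding T_def by (simp only: power_sum_recurrence)
  have quads: "quad 1 0 = var_x\<^sup>2 + var_y\<^sup>2" "quad 0 1 = var_x * var_y"
    by (simp_all add: quad_def)
  have "cxy (det_PQ ^ Suc (Suc k)) * T (Suc (Suc k)) =
      (D * quad 1 0) * (cxy (det_PQ ^ Suc k) * T (Suc k)) -
      (D * quad 0 1) * ((D * quad 0 1) * (cxy (det_PQ ^ k) * T k))"
    unfolding T_rec quads D_def by (simp add: cxy_mult cxy_power algebra_simps power2_eq_square)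
  also have "\<dots> = pre * ((D * quad 1 0) * H\<^sub>1 - (D * quad 0 1) * ((D * quad 0 1) * H\<^sub>0))"
    unfolding H\<^sub>0(2) H\<^sub>1(2) by (simp add: algebra_simps)
  finally have "cxy (det_PQ ^ Suc (Suc k)) * T (Suc (Suc k)) =
      pre * (D * quad 1 0 * H\<^sub>1 - D * quad 0 1 * (D * quad 0 1 * H\<^sub>0))" .
  moreover have "QP_form (Suc (Suc k)) (D * quad 1 0 * H\<^sub>1 - D * quad 0 1 * (D * quad 0 1 * H\<^sub>0))"
    unfolding D_def by (intro QP_form_diff QP_form_mult_det_quad H\<^sub>0(1) H\<^sub>1(1))
  ultimately show ?case
    unfolding T_def by blast
qed

text \<open>\<open>Psi\<close> and \<open>Phi\<close> are instances, \<open>pre\<close> being the denominator cleared in their defining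
  identities.\<close>

definition expansion_coeffs :: "xypoly \<Rightarrow> xypoly \<Rightarrow> nat \<Rightarrow> nat \<Rightarrow> mpoly4" where
  "expansion_coeffs pre W m = (THE f. (\<forall>r. m < r \<longrightarrow> f r = 0) \<and>
     cxy (det_PQ ^ m) * W = pre * binary_form quad_Q quad_P m (\<lambda>r. cxy (f r)))"

lemma expansion_coeffs_spec:
  assumes "pre \<noteq> 0" "QP_form m H" "cxy (det_PQ ^ m) * W = pre * H"
  shows "(\<forall>r. m < r \<longrightarrow> expansion_coeffs pre W m r = 0) \<and>
    cxy (det_PQ ^ m) * W = pre * binary_form quad_Q quad_P m (\<lambda>r. cxy (expansion_coeffs pre W m r))"
proof -
  obtain c where H: "H = binary_form quad_Q quad_P m (\<lambda>r. cxy (c r))"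
    using assms(2) QP_form_def by blast
  let ?spec = "\<lambda>f. (\<forall>r. m < r \<longrightarrow> f r = 0) \<and>
     cxy (det_PQ ^ m) * W = pre * binary_form quad_Q quad_P m (\<lambda>r. cxy (f r))"
  have existence: "?spec (\<lambda>r. if r \<le> m then c r else 0)"
    using assms(3) unfolding H by (auto intro: binary_form_cong)
  have uniqueness: "f = g" if "?spec f" "?spec g" for f g
  proof
    fix r
    have "binary_form quad_Q quad_P m (\<lambda>r. cxy (f r - g r)) = 0"
      using that assms(1) by (simp add: cxy_diff binary_form_diff[symmetric])
    then show "f r = g r"
      using that binary_form_QP_eq_0_imp_coeff_eq_0[of m "\<lambda>r. f r - g r" r] by (cases "r \<le> m") auto
  qed
  show ?thesis
    unfolding expansion_coeffs_def
    by (rule theI[of ?spec, OF existence]) (erule uniqueness[OF _ existence])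
qed

lemma expansion_coeffs_recurrence:
  assumes "pre \<noteq> 0" "QP_form m H" "cxy (det_PQ ^ m) * W = pre * H"
    and "Eop_xy pre = 0" "Eop_xy W = 0" "r + 1 \<le> m"
  shows "of_nat (m - r) * expansion_coeffs pre W m r = - Eop (expansion_coeffs pre W m (r + 1))"
proof -
  define f where "f = expansion_coeffs pre W m"
  define B where "B = binary_form quad_Q quad_P m (\<lambda>r. cxy (f r))"
  have expansion: "cxy (det_PQ ^ m) * W = pre * B"
    using expansion_coeffs_spec[OF assms(1-3)] unfolding f_def B_def by blast
  have "pre * Eop_xy B = Eop_xy (cxy (det_PQ ^ m) * W)"
    by (simp add: expansion Eop_xy.mult assms(4))
  also have "\<dots> = 0"
    by (simp add: Eop_xy.mult Eop.power Eop_det_PQ assms(5))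
  finally have "Eop_xy B = 0"
    using assms(1) by simp
  define g where "g r = Eop (f r) + (case r of 0 \<Rightarrow> 0 | Suc i \<Rightarrow> of_nat (m - i) * f i)" for r
  have m: "Suc (m - 1) = m"
    using assms(6) by simp
  have "Eop_xy B = binary_form quad_Q quad_P m (\<lambda>r. cxy (g r))"
    unfolding B_def Eop_xy.binary_form[OF Eop_xy_quad_P] Eop_xy_quad_Q P_mult_binary_form m
      binary_form_add
    by (intro binary_form_cong) (simp add: g_def cxy_hom split: nat.split)
  with \<open>Eop_xy B = 0\<close> have "g (r + 1) = 0"
    using binary_form_QP_eq_0_imp_coeff_eq_0[of m g "r + 1"] assms(6) by simp
  then show ?thesis
    unfolding f_def g_def by (simp add: eq_neg_iff_add_eq_0 add.commute)
qed

lemma Psi_eq_expansion_coeffs: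
  "Psi n = expansion_coeffs ((var_x + var_y) ^ delta n) (var_x ^ n + var_y ^ n) (n div 2)"
  unfolding Psi_def expansion_coeffs_def binary_form_def det_PQ_def quad_Q_def quad_P_def ..

lemma Phi_eq_expansion_coeffs:
  "Phi n = expansion_coeffs ((var_x - var_y) * (var_x + var_y) ^ delta (n - 1)) (var_x ^ n - var_y ^ n)
    ((n - 1) div 2)"
  unfolding Phi_def expansion_coeffs_def binary_form_def det_PQ_def quad_Q_def quad_P_def ..

lemma Psi_expansion:
  "\<exists>H. QP_form (n div 2) H \<and>
    cxy (det_PQ ^ (n div 2)) * (var_x ^ n + var_y ^ n) = (var_x + var_y) ^ delta n * H"
proof (cases "even n")
  case True
  then obtain k where n: "n = 2 * k" ..
  have "cxy 2 = 2"
    using cxy_of_nat[of 2] by simp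
  then have "\<exists>H. QP_form k H \<and> cxy (det_PQ ^ k) * (var_x ^ (0 + 2 * k) + 1 * var_y ^ (0 + 2 * k)) = 1 * H"
    by (intro power_sum_expansion[where e = 0]) (simp_all add: quad_def power2_eq_square)
  then show ?thesis
    by (simp add: n delta_def)
next
  case False
  then obtain k where n: "n = 2 * k + 1"
    using oddE by blast
  have "\<exists>H. QP_form k H \<and>
      cxy (det_PQ ^ k) * (var_x ^ (1 + 2 * k) + 1 * var_y ^ (1 + 2 * k)) = (var_x + var_y) * H"
    by (intro power_sum_expansion[where c = 1 and e = "-1"])
      (simp_all add: quad_def cxy_hom algebra_simps power2_eq_square power3_eq_cube)
  then show ?thesis
    by (simp add: n delta_def)
qed

lemma Phi_expansion:
  assumes "n \<ge> 1"
  shows "\<exists>H. QP_form ((n - 1) div 2) H \<and>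
    cxy (det_PQ ^ ((n - 1) div 2)) * (var_x ^ n - var_y ^ n) =
    (var_x - var_y) * (var_x + var_y) ^ delta (n - 1) * H"
proof (cases "even n")
  case True
  then obtain k' where "n = 2 * k'" ..
  with assms obtain k where n: "n = 2 * k + 2"
    by (intro that[of "k' - 1"]) simp
  have "\<exists>H. QP_form k H \<and> cxy (det_PQ ^ k) * (var_x ^ (2 + 2 * k) + (- 1) * var_y ^ (2 + 2 * k)) =
      ((var_x - var_y) * (var_x + var_y)) * H"
    by (intro power_sum_expansion[where c = 1 and e = 0])
      (simp_all add: quad_def algebra_simps power2_eq_square numeral_eq_Suc)
  then show ?thesis
    by (simp add: n delta_def)
next
  case False
  then obtain k where n: "n = 2 * k + 1"
    using oddE by blast
  have "\<exists>H. QP_form k H \<and>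
      cxy (det_PQ ^ k) * (var_x ^ (1 + 2 * k) + (- 1) * var_y ^ (1 + 2 * k)) = (var_x - var_y) * H"
    by (intro power_sum_expansion[where c = 1 and e = 1])
      (simp_all add: quad_def algebra_simps power2_eq_square power3_eq_cube)
  then show ?thesis
    by (simp add: n delta_def)
qed

lemma Psi_recurrence:
  assumes "r + 1 \<le> n div 2"
  shows "of_nat (n div 2 - r) * Psi n r = - Eop (Psi n (r + 1))"
proof -
  have "(var_x + var_y) ^ delta n \<noteq> 0"
    using var_x_plus_var_y_nonzero by simp
  moreover obtain H where "QP_form (n div 2) H"
    "cxy (det_PQ ^ (n div 2)) * (var_x ^ n + var_y ^ n) = (var_x + var_y) ^ delta n * H"
    using Psi_expansion by blast
  moreover have "Eop_xy ((var_x + var_y) ^ delta n) = 0" "Eop_xy (var_x ^ n + var_y ^ n) = 0"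
    by (simp_all add: Eop_xy.add Eop_xy.power)
  ultimately show ?thesis
    unfolding Psi_eq_expansion_coeffs using assms by (rule expansion_coeffs_recurrence)
qed

lemma Phi_recurrence:
  assumes "r + 1 \<le> (n - 1) div 2"
  shows "of_nat ((n - 1) div 2 - r) * Phi n r = - Eop (Phi n (r + 1))"
proof -
  have "n \<ge> 1"
    using assms by (cases n) simp_all
  have "(var_x - var_y) * (var_x + var_y) ^ delta (n - 1) \<noteq> 0"
    using var_x_plus_var_y_nonzero var_x_minus_var_y_nonzero by simp
  moreover obtain H where "QP_form ((n - 1) div 2) H"
    "cxy (det_PQ ^ ((n - 1) div 2)) * (var_x ^ n - var_y ^ n) =
      (var_x - var_y) * (var_x + var_y) ^ delta (n - 1) * H"
    using Phi_expansion[OF \<open>n \<ge> 1\<close>] by blast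
  moreover have "Eop_xy ((var_x - var_y) * (var_x + var_y) ^ delta (n - 1)) = 0"
    "Eop_xy (var_x ^ n - var_y ^ n) = 0"
    by (simp_all add: Eop_xy.add Eop_xy.diff Eop_xy.mult Eop_xy.power)
  ultimately show ?thesis
    unfolding Phi_eq_expansion_coeffs using assms by (rule expansion_coeffs_recurrence)
qed

theorem theorem8p2:
  fixes n r :: nat
  assumes "n \<ge> 1"
  shows "(r + 1 \<le> n div 2 \<longrightarrow>
            of_nat (n div 2 - r) * Psi n r = - Eop (Psi n (r + 1))) \<and>
         (r + 1 \<le> (n - 1) div 2 \<longrightarrow>
            of_nat ((n - 1) div 2 - r) * Phi n r = - Eop (Phi n (r + 1)))"
  using Psi_recurrence Phi_recurrence by blast

end
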